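(* Let $n \ge 16$ be an integer and let $p$ be a real number with $1/n \le p \le 1/4$. Let $X$ be a binomially distributed random variable with parameters $n$ and $p$. Then $\Pr\big[X \le pn - \sqrt{pn}/2\big] \ge 3/160$. *)

theory Defs
  imports "HOL-Probability.Probability"
begin

end

theory Submission
  imports Defs
begin

text \<open>
  Write \<open>\<mu> = np\<close>, \<open>v = np(1 - p)\<close> and \<open>S(j) = \<Sum>\<^sub>k\<^sub>\<le>\<^sub>j (\<mu> - k) P[X = k]\<close>.
  By Cauchy--Schwarz, \<open>S(m)\<^sup>2 \<le> v \<cdot> P[X \<le> m]\<close>, so it suffices to bound \<open>S(m)\<close> from below
  for \<open>m = \<lfloor>\<mu> - \<surd>\<mu>/2\<rfloor>\<close>. At \<open>K = \<lfloor>\<mu>\<rfloor>\<close>, \<open>2 S(K) = E|X - \<mu>|\<close>, which the second and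
  fourth central moments bound by \<open>v / \<surd>(3v + 1)\<close>. From \<open>S(j - 1) = j(1 - p) P[X = j]\<close>
  one gets \<open>S(j) = S(j - 1) (1 + (\<mu> - j)/(j(1 - p)))\<close>, and over the \<open>\<surd>\<mu>/2\<close> steps from
  \<open>m\<close> to \<open>K\<close> these factors multiply to a bounded constant. When \<open>\<mu>\<close> is small, the atom
  \<open>P[X = 0] = (1 - p)\<^sup>n\<close> alone is large enough.
\<close>

text \<open>The mass function of \<open>binomial_pmf n p\<close>, written out so that it is defined for every \<open>p\<close>.\<close>

definition binom_weight :: "nat \<Rightarrow> real \<Rightarrow> nat \<Rightarrow> real" where
  "binom_weight n p k = real (n choose k) * p ^ k * (1 - p) ^ (n - k)"

lemma binom_weight_nonneg: "0 \<le> p \<Longrightarrow> p \<le> 1 \<Longrightarrow> 0 \<le> binom_weight n p k"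
  by (simp add: binom_weight_def)

lemma binom_weight_pos: "0 < p \<Longrightarrow> p < 1 \<Longrightarrow> k \<le> n \<Longrightarrow> 0 < binom_weight n p k"
  by (simp add: binom_weight_def)

lemma sum_binom_weight: "(\<Sum>k\<le>n. binom_weight n p k) = 1"
proof -
  have "(\<Sum>k\<le>n. binom_weight n p k) = (p + (1 - p)) ^ n"
    by (subst binomial_ring) (simp add: atLeast0AtMost binom_weight_def)
  thus ?thesis by simp
qed

lemma prob_binomial_pmf_atMost:
  assumes "0 \<le> p" "p \<le> 1"
  shows "measure_pmf.prob (binomial_pmf n p) {..m} = (\<Sum>k\<le>m. binom_weight n p k)"
  using assms by (subst measure_measure_pmf_finite) (auto simp: binom_weight_def)

lemma Suc_mult_binom_weight:
  assumes "k < n"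
  shows "real (Suc k) * (1 - p) * binom_weight n p (Suc k) = real (n - k) * p * binom_weight n p k"
proof -
  have "Suc k * (n choose Suc k) = (n - k) * (n choose k)"
    using times_binomial_minus1_eq[of "Suc k" n] binomial_absorb_comp[of n k] by simp
  hence choose: "real (Suc k) * real (n choose Suc k) = real (n - k) * real (n choose k)"
    by (metis of_nat_mult)
  have "real (Suc k) * (1 - p) * binom_weight n p (Suc k) =
      (real (Suc k) * real (n choose Suc k)) * p ^ Suc k * (1 - p) ^ Suc (n - Suc k)"
    by (simp add: binom_weight_def)
  also have "\<dots> = real (n - k) * p * binom_weight n p k"
    unfolding choose binom_weight_def using assms by (simp add: Suc_diff_Suc algebra_simps)
  finally show ?thesis .
qed

definition falling_fact :: "real \<Rightarrow> nat \<Rightarrow> real" where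
  "falling_fact x r = (\<Prod>i<r. x - real i)"

lemma falling_fact_Suc: "falling_fact x (Suc r) = x * falling_fact (x - 1) r"
  unfolding falling_fact_def prod.lessThan_Suc_shift by (simp add: algebra_simps)

lemma falling_fact_small:
  "falling_fact x 0 = 1" "falling_fact x 1 = x" "falling_fact x (Suc 0) = x" "falling_fact x 2 = x * (x - 1)"
  "falling_fact x 3 = x * (x - 1) * (x - 2)" "falling_fact x 4 = x * (x - 1) * (x - 2) * (x - 3)"
  by (simp_all add: falling_fact_def eval_nat_numeral algebra_simps)

lemma sum_falling_fact_binom_weight:
  "(\<Sum>k\<le>n. falling_fact (real k) r * binom_weight n p k) = falling_fact (real n) r * p ^ r"
proof (induction r arbitrary: n)
  case 0
  then show ?case using sum_binom_weight by (simp add: falling_fact_small)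
next
  case (Suc r)
  show ?case
  proof (cases n)
    case 0
    then show ?thesis by (simp add: falling_fact_Suc)
  next
    case (Suc n')
    have shifted: "falling_fact (real (Suc j)) (Suc r) * binom_weight n p (Suc j) =
        real n * p * (falling_fact (real j) r * binom_weight n' p j)" for j
    proof -
      have choose: "real (Suc j) * real (Suc n' choose Suc j) = real (Suc n') * real (n' choose j)"
        using Suc_times_binomial[of j n'] by (metis of_nat_mult)
      have "falling_fact (real (Suc j)) (Suc r) * binom_weight n p (Suc j) =
          (real (Suc j) * real (Suc n' choose Suc j)) * falling_fact (real j) r * p ^ Suc j * (1 - p) ^ (n' - j)"
        by (simp add: falling_fact_Suc binom_weight_def Suc)
      then show ?thesis
        unfolding choose by (simp add: binom_weight_def Suc mult_ac)
    qed
    have "(\<Sum>k\<le>n. falling_fact (real k) (Suc r) * binom_weight n p k)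
        = (\<Sum>j\<le>n'. falling_fact (real (Suc j)) (Suc r) * binom_weight n p (Suc j))"
      unfolding Suc sum.atMost_Suc_shift by (simp add: falling_fact_Suc del: of_nat_Suc)
    also have "\<dots> = (\<Sum>j\<le>n'. real n * p * (falling_fact (real j) r * binom_weight n' p j))"
      by (simp only: shifted)
    also have "\<dots> = real n * p * (falling_fact (real n') r * p ^ r)"
      by (simp add: sum_distrib_left[symmetric] Suc.IH)
    also have "\<dots> = falling_fact (real n) (Suc r) * p ^ Suc r"
      by (simp add: falling_fact_Suc Suc)
    finally show ?thesis .
  qed
qed

lemma sum_scaled_falling_fact_binom_weight:
  "(\<Sum>k\<le>n. c * falling_fact (real k) r * binom_weight n p k) = c * (falling_fact (real n) r * p ^ r)"
  using sum_falling_fact_binom_weight[where n=n and r=r and p=p] by (simp add: sum_distrib_left[symmetric] mult.assoc)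

lemma binomial_first_central_moment:
  "(\<Sum>k\<le>n. (real n * p - real k) * binom_weight n p k) = 0"
proof -
  have "(\<Sum>k\<le>n. (real n * p - real k) * binom_weight n p k) =
     (\<Sum>k\<le>n. real n * p * falling_fact (real k) 0 * binom_weight n p k
        + (-1) * falling_fact (real k) 1 * binom_weight n p k)"
    by (intro sum.cong) (auto simp: falling_fact_small algebra_simps)
  also have "\<dots> = 0"
    unfolding sum.distrib sum_scaled_falling_fact_binom_weight by (simp add: falling_fact_small)
  finally show ?thesis .
qed

lemma binomial_second_central_moment:
  "(\<Sum>k\<le>n. (real n * p - real k)^2 * binom_weight n p k) = real n * p * (1 - p)"
proof -
  define \<mu> where "\<mu> = real n * p"
  have "(\<Sum>k\<le>n. (\<mu> - real k)^2 * binom_weight n p k) =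
     (\<Sum>k\<le>n. 1 * falling_fact (real k) 2 * binom_weight n p k
        + (1 - 2 * \<mu>) * falling_fact (real k) 1 * binom_weight n p k
        + \<mu>^2 * falling_fact (real k) 0 * binom_weight n p k)"
    by (intro sum.cong) (auto simp: falling_fact_small algebra_simps power2_eq_square)
  also have "\<dots> = real n * p * (1 - p)"
    unfolding sum.distrib sum_scaled_falling_fact_binom_weight
    by (simp add: falling_fact_small \<mu>_def algebra_simps power2_eq_square)
  finally show ?thesis by (simp add: \<mu>_def)
qed

lemma binomial_fourth_central_moment:
  "(\<Sum>k\<le>n. (real n * p - real k)^4 * binom_weight n p k) =
     real n * p * (1 - p) * (1 + 3 * (real n - 2) * p * (1 - p))"
proof -
  define \<mu> where "\<mu> = real n * p"
  have "(\<Sum>k\<le>n. (\<mu> - real k)^4 * binom_weight n p k) =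
     (\<Sum>k\<le>n. 1 * falling_fact (real k) 4 * binom_weight n p k
        + (6 - 4 * \<mu>) * falling_fact (real k) 3 * binom_weight n p k
        + (7 - 12 * \<mu> + 6 * \<mu>^2) * falling_fact (real k) 2 * binom_weight n p k
        + (1 - 4 * \<mu> + 6 * \<mu>^2 - 4 * \<mu>^3) * falling_fact (real k) 1 * binom_weight n p k
        + \<mu>^4 * falling_fact (real k) 0 * binom_weight n p k)"
    by (intro sum.cong)
       (auto simp: falling_fact_small algebra_simps power2_eq_square power3_eq_cube power4_eq_xxxx)
  also have "\<dots> = real n * p * (1 - p) * (1 + 3 * (real n - 2) * p * (1 - p))"
    unfolding sum.distrib sum_scaled_falling_fact_binom_weight
    by (simp add: falling_fact_small \<mu>_def algebra_simps power2_eq_square power3_eq_cube power4_eq_xxxx)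
  finally show ?thesis by (simp add: \<mu>_def)
qed

lemma binomial_fourth_central_moment_le:
  assumes "0 \<le> p" "p \<le> 1"
  shows "(\<Sum>k\<le>n. (real n * p - real k)^4 * binom_weight n p k)
    \<le> real n * p * (1 - p) * (3 * (real n * p * (1 - p)) + 1)"
proof -
  have "real n * p * (1 - p) * (1 + 3 * (real n - 2) * p * (1 - p)) =
      real n * p * (1 - p) * (3 * (real n * p * (1 - p)) + 1) - 6 * real n * (p * (1 - p))^2"
    by (simp add: algebra_simps power2_eq_square)
  also have "\<dots> \<le> real n * p * (1 - p) * (3 * (real n * p * (1 - p)) + 1)"
    by simp
  finally show ?thesis by (simp only: binomial_fourth_central_moment)
qed

lemma sq_le_abs_plus_fourth:
  fixes y u :: real
  assumes "0 < u"
  shows "y^2 \<le> 2 * u / 3 * \<bar>y\<bar> + y^4 / (3 * u^2)"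
proof -
  have "0 \<le> \<bar>y\<bar> * (\<bar>y\<bar> - u)^2 * (\<bar>y\<bar> + 2 * u)" using assms by simp
  also have "\<dots> = \<bar>y\<bar>^4 - 3 * u^2 * \<bar>y\<bar>^2 + 2 * u^3 * \<bar>y\<bar>"
    by (simp add: power2_eq_square power3_eq_cube power4_eq_xxxx algebra_simps)
  finally have "3 * u^2 * y^2 \<le> 2 * u^3 * \<bar>y\<bar> + y^4" by simp
  hence "y^2 \<le> (2 * u^3 * \<bar>y\<bar> + y^4) / (3 * u^2)"
    using assms by (simp add: le_divide_eq mult.commute)
  also have "\<dots> = 2 * u / 3 * \<bar>y\<bar> + y^4 / (3 * u^2)"
    using assms by (simp add: field_simps power2_eq_square power3_eq_cube)
  finally show ?thesis .
qed

text \<open>The Hoelder bound \<open>E|Y| \<ge> (E Y\<^sup>2)\<^sup>3\<^sup>/\<^sup>2 / (E Y\<^sup>4)\<^sup>1\<^sup>/\<^sup>2\<close>, in the form needed here.\<close>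

lemma abs_sum_ge_of_moments:
  fixes w y :: "'a \<Rightarrow> real"
  assumes w: "\<And>i. i \<in> A \<Longrightarrow> 0 \<le> w i"
    and second: "(\<Sum>i\<in>A. (y i)^2 * w i) = v"
    and fourth: "(\<Sum>i\<in>A. (y i)^4 * w i) \<le> v * (3 * v + 1)"
  shows "v / sqrt (3 * v + 1) \<le> (\<Sum>i\<in>A. \<bar>y i\<bar> * w i)"
proof -
  define u where "u = sqrt (3 * v + 1)"
  define M where "M = (\<Sum>i\<in>A. \<bar>y i\<bar> * w i)"
  have "0 \<le> v" unfolding second[symmetric] using w by (simp add: sum_nonneg)
  hence u: "0 < u" "u^2 = 3 * v + 1" by (simp_all add: u_def)
  have "v \<le> (\<Sum>i\<in>A. 2 * u / 3 * (\<bar>y i\<bar> * w i) + (y i)^4 * w i / (3 * u^2))"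
    unfolding second[symmetric]
  proof (rule sum_mono)
    fix i assume "i \<in> A"
    from mult_right_mono[OF sq_le_abs_plus_fourth[OF u(1), of "y i"] w[OF this]]
    show "(y i)^2 * w i \<le> 2 * u / 3 * (\<bar>y i\<bar> * w i) + (y i)^4 * w i / (3 * u^2)"
      by (simp add: algebra_simps)
  qed
  also have "\<dots> = 2 * u / 3 * M + (\<Sum>i\<in>A. (y i)^4 * w i) / (3 * u^2)"
    by (simp add: M_def sum.distrib sum_distrib_left sum_divide_distrib)
  also have "(\<Sum>i\<in>A. (y i)^4 * w i) / (3 * u^2) \<le> v * (3 * v + 1) / (3 * u^2)"
    using fourth u \<open>0 \<le> v\<close> by (intro divide_right_mono) auto
  also have "v * (3 * v + 1) / (3 * u^2) = v / 3"
    using \<open>0 \<le> v\<close> unfolding u(2) by (simp add: field_simps)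
  finally have "v \<le> u * M" by linarith
  thus ?thesis using u by (simp add: M_def u_def divide_le_eq mult.commute)
qed

lemma binomial_mean_abs_deviation_ge:
  assumes "0 \<le> p" "p \<le> 1"
  shows "real n * p * (1 - p) / sqrt (3 * (real n * p * (1 - p)) + 1)
     \<le> (\<Sum>k\<le>n. \<bar>real n * p - real k\<bar> * binom_weight n p k)"
  using assms
  by (intro abs_sum_ge_of_moments binom_weight_nonneg binomial_second_central_moment
        binomial_fourth_central_moment_le)

definition centered_partial_sum :: "nat \<Rightarrow> real \<Rightarrow> nat \<Rightarrow> real" where
  "centered_partial_sum n p j = (\<Sum>k\<le>j. (real n * p - real k) * binom_weight n p k)"

lemma centered_partial_sum_eq:
  "j < n \<Longrightarrow> centered_partial_sum n p j = real (Suc j) * (1 - p) * binom_weight n p (Suc j)"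
proof (induction j)
  case 0
  then show ?case using Suc_mult_binom_weight[of 0 n p] by (simp add: centered_partial_sum_def)
next
  case (Suc j)
  have "centered_partial_sum n p (Suc j)
      = centered_partial_sum n p j + (real n * p - real (Suc j)) * binom_weight n p (Suc j)"
    by (simp add: centered_partial_sum_def)
  also have "\<dots> = (real n - real (Suc j)) * p * binom_weight n p (Suc j)"
    using Suc by (simp add: algebra_simps)
  also have "\<dots> = real (Suc (Suc j)) * (1 - p) * binom_weight n p (Suc (Suc j))"
    using Suc_mult_binom_weight[of "Suc j" n p] Suc.prems by (simp add: of_nat_diff)
  finally show ?case .
qed

lemma centered_partial_sum_pos: "0 < p \<Longrightarrow> p < 1 \<Longrightarrow> j < n \<Longrightarrow> 0 < centered_partial_sum n p j"
  by (simp add: centered_partial_sum_eq binom_weight_pos)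

lemma sum_abs_centered_eq:
  assumes "K \<le> n" "real K \<le> real n * p" "real n * p < real K + 1"
  shows "(\<Sum>k\<le>n. \<bar>real n * p - real k\<bar> * binom_weight n p k) = 2 * centered_partial_sum n p K"
proof -
  let ?d = "\<lambda>k. (real n * p - real k) * binom_weight n p k"
  have split: "{..n} = {..K} \<union> {K<..n}" "{..K} \<inter> {K<..n} = {}" using assms(1) by auto
  have low: "(\<Sum>k\<le>K. \<bar>real n * p - real k\<bar> * binom_weight n p k) = (\<Sum>k\<le>K. ?d k)"
    using assms(2) by (intro sum.cong) auto
  have high: "(\<Sum>k\<in>{K<..n}. \<bar>real n * p - real k\<bar> * binom_weight n p k) = (\<Sum>k\<in>{K<..n}. - ?d k)"
  proof (rule sum.cong)
    fix k assume "k \<in> {K<..n}"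
    hence "real K + 1 \<le> real k" by auto
    with assms(3) show "\<bar>real n * p - real k\<bar> * binom_weight n p k = - ?d k"
      by (simp add: abs_of_neg algebra_simps)
  qed simp
  have "(\<Sum>k\<le>n. \<bar>real n * p - real k\<bar> * binom_weight n p k)
      = (\<Sum>k\<le>K. ?d k) + (\<Sum>k\<in>{K<..n}. - ?d k)"
    unfolding split(1) by (simp add: sum.union_disjoint split(2) low high)
  also have "(\<Sum>k\<in>{K<..n}. ?d k) = centered_partial_sum n p n - centered_partial_sum n p K"
    unfolding centered_partial_sum_def split(1) by (simp add: sum.union_disjoint split(2))
  moreover have "centered_partial_sum n p n = 0"
    using binomial_first_central_moment by (simp add: centered_partial_sum_def)
  ultimately show ?thesis by (simp add: sum_negf centered_partial_sum_def)
qed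

lemma centered_partial_sum_le_exp:
  assumes p: "0 < p" "p < 1" and "m \<le> k" "k < n"
  shows "centered_partial_sum n p k
    \<le> centered_partial_sum n p m * exp (\<Sum>j=Suc m..k. (real n * p - real j) / (real j * (1 - p)))"
  using assms(3,4)
proof (induction k rule: dec_induct)
  case base
  then show ?case by simp
next
  case (step k)
  define x where "x = (real n * p - real (Suc k)) / (real (Suc k) * (1 - p))"
  have "k < n" using step by simp
  have "0 \<le> centered_partial_sum n p k"
    using centered_partial_sum_pos[OF p \<open>k < n\<close>] by simp
  have "real (Suc k) * (1 - p) \<noteq> 0" using p by simp
  hence weight: "binom_weight n p (Suc k) = centered_partial_sum n p k / (real (Suc k) * (1 - p))"
    by (simp add: centered_partial_sum_eq[OF \<open>k < n\<close>])
  have "centered_partial_sum n p (Suc k)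
      = centered_partial_sum n p k + (real n * p - real (Suc k)) * binom_weight n p (Suc k)"
    by (simp add: centered_partial_sum_def)
  also have "\<dots> = centered_partial_sum n p k * (1 + x)"
    unfolding weight x_def by (simp add: field_simps)
  also have "\<dots> \<le> centered_partial_sum n p k * exp x"
    using \<open>0 \<le> centered_partial_sum n p k\<close> by (intro mult_left_mono) auto
  also have "\<dots> \<le> centered_partial_sum n p m
      * exp (\<Sum>j=Suc m..k. (real n * p - real j) / (real j * (1 - p))) * exp x"
    using step.IH \<open>k < n\<close> by (intro mult_right_mono) auto
  also have "\<dots> = centered_partial_sum n p m
      * exp (\<Sum>j=Suc m..Suc k. (real n * p - real j) / (real j * (1 - p)))"
    using step.hyps by (simp add: sum.cl_ivl_Suc exp_add x_def)
  finally show ?case .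
qed

lemma sum_gap_le:
  fixes \<mu> t :: real
  assumes m: "real m \<le> \<mu> - t" "\<mu> - t < real m + 1"
    and K: "real K \<le> \<mu>" "\<mu> < real K + 1" and t: "1/2 \<le> t"
  shows "(\<Sum>j=Suc m..K. \<mu> - real j) \<le> (t + 1/2)^2 / 2"
proof -
  have closed: "(\<Sum>j=Suc m..k. \<mu> - real j) = (real k - real m) * (2 * \<mu> - real m - 1 - real k) / 2"
    if "m \<le> k" for k
    using that by (induction k rule: dec_induct) (simp_all add: sum.cl_ivl_Suc field_simps)
  have "real m < real K + 1" using m K t by linarith
  hence "m \<le> K" by simp
  define f where "f = \<mu> - real m - 1"
  define l where "l = \<mu> - real K"
  have "(real K - real m) * (2 * \<mu> - real m - 1 - real K) = (f + 1/2)^2 - (l - 1/2)^2"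
    unfolding f_def l_def by (simp add: power2_eq_square algebra_simps)
  also have "\<dots> \<le> (f + 1/2)^2" by simp
  also have "\<dots> \<le> (t + 1/2)^2" using m t by (intro power_mono) (auto simp: f_def)
  finally show ?thesis unfolding closed[OF \<open>m \<le> K\<close>] by simp
qed

lemma centered_partial_sum_le_exp_gap:
  assumes p: "0 < p" "p < 1" and "K < n"
    and m: "real m \<le> real n * p - t" "real n * p - t < real m + 1"
    and K: "real K \<le> real n * p" "real n * p < real K + 1"
    and t: "1/2 \<le> t" "t < real n * p"
  shows "centered_partial_sum n p K
    \<le> centered_partial_sum n p m * exp ((t + 1/2)^2 / (2 * ((real n * p - t) * (1 - p))))"
proof -
  define \<mu> where "\<mu> = real n * p"
  have "real m < real K + 1" using m K t by linarith
  hence "m \<le> K" by simp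
  have denom: "0 < (\<mu> - t) * (1 - p)" using t p by (simp add: \<mu>_def)
  have "(\<Sum>j=Suc m..K. (\<mu> - real j) / (real j * (1 - p)))
      \<le> (\<Sum>j=Suc m..K. (\<mu> - real j) / ((\<mu> - t) * (1 - p)))"
  proof (rule sum_mono)
    fix j assume j: "j \<in> {Suc m..K}"
    hence "0 \<le> \<mu> - real j" "\<mu> - t \<le> real j" "0 < real j" using K m by (auto simp: \<mu>_def)
    thus "(\<mu> - real j) / (real j * (1 - p)) \<le> (\<mu> - real j) / ((\<mu> - t) * (1 - p))"
      using denom p t by (intro divide_left_mono mult_right_mono mult_pos_pos) (auto simp: \<mu>_def)
  qed
  also have "\<dots> = (\<Sum>j=Suc m..K. \<mu> - real j) / ((\<mu> - t) * (1 - p))"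
    by (simp add: sum_divide_distrib)
  also have "\<dots> \<le> (t + 1/2)^2 / 2 / ((\<mu> - t) * (1 - p))"
    using sum_gap_le[OF m K t(1)] denom by (intro divide_right_mono) (auto simp: \<mu>_def)
  finally have exp_le: "exp (\<Sum>j=Suc m..K. (\<mu> - real j) / (real j * (1 - p)))
      \<le> exp ((t + 1/2)^2 / (2 * ((\<mu> - t) * (1 - p))))"
    by simp
  have "0 \<le> centered_partial_sum n p m"
    using centered_partial_sum_pos[OF p, of m n] \<open>m \<le> K\<close> \<open>K < n\<close> by simp
  from centered_partial_sum_le_exp[OF p \<open>m \<le> K\<close> \<open>K < n\<close>]
    mult_left_mono[OF exp_le[unfolded \<mu>_def] this]
  show ?thesis by (rule order_trans)
qed

lemma centered_partial_sum_sq_le: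
  assumes "0 \<le> p" "p \<le> 1" "m \<le> n"
  shows "centered_partial_sum n p m ^ 2 \<le> real n * p * (1 - p) * (\<Sum>k\<le>m. binom_weight n p k)"
proof -
  let ?w = "binom_weight n p"
  have w: "0 \<le> ?w k" for k using assms(1,2) by (rule binom_weight_nonneg)
  have "centered_partial_sum n p m ^ 2
      = (\<Sum>k\<le>m. ((real n * p - real k) * sqrt (?w k)) * sqrt (?w k))^2"
    unfolding centered_partial_sum_def using w by (simp add: mult.assoc)
  also have "\<dots> \<le> (\<Sum>k\<le>m. ((real n * p - real k) * sqrt (?w k))^2) * (\<Sum>k\<le>m. (sqrt (?w k))^2)"
    by (rule Cauchy_Schwarz_ineq_sum)
  also have "\<dots> = (\<Sum>k\<le>m. (real n * p - real k)^2 * ?w k) * (\<Sum>k\<le>m. ?w k)"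
    using w by (simp add: power_mult_distrib)
  also have "\<dots> \<le> real n * p * (1 - p) * (\<Sum>k\<le>m. ?w k)"
  proof (rule mult_right_mono)
    have "(\<Sum>k\<le>m. (real n * p - real k)^2 * ?w k) \<le> (\<Sum>k\<le>n. (real n * p - real k)^2 * ?w k)"
      using assms(3) w by (intro sum_mono2) auto
    thus "(\<Sum>k\<le>m. (real n * p - real k)^2 * ?w k) \<le> real n * p * (1 - p)"
      by (simp only: binomial_second_central_moment)
    show "0 \<le> (\<Sum>k\<le>m. ?w k)" using w by (simp add: sum_nonneg)
  qed
  finally show ?thesis .
qed

lemma exp_129_le: "exp (129/100 :: real) \<le> 378/100"
proof -
  have "exp (29/100 :: real) \<le> 1 + 29/100 + (29/100)^2" by (rule exp_bound) auto
  moreover have "exp (1 :: real) \<le> 272/100" using e_less_272 by simp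
  ultimately have "exp 1 * exp (29/100 :: real) \<le> 272/100 * (1 + 29/100 + (29/100)^2)"
    by (intro mult_mono) auto
  also have "\<dots> \<le> 378/100" by (simp add: power2_eq_square)
  finally show ?thesis by (simp flip: exp_add)
qed

lemma exp_384_le: "exp (384/100 :: real) \<le> 160/3"
proof -
  have "exp (84/100 :: real) \<le> 1 + 84/100 + (84/100)^2" by (rule exp_bound) auto
  moreover have "exp 1 ^ 3 \<le> (272/100 :: real) ^ 3" using e_less_272 by (intro power_mono) auto
  ultimately have "exp 1 ^ 3 * exp (84/100 :: real) \<le> (272/100) ^ 3 * (1 + 84/100 + (84/100)^2)"
    by (intro mult_mono) auto
  also have "\<dots> \<le> 160/3" by (simp add: power2_eq_square power3_eq_cube)
  finally show ?thesis by (simp add: power3_eq_cube flip: exp_add)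
qed

lemma binom_weight_zero_ge:
  assumes "0 \<le> p" "p \<le> 1/4" "real n * p \<le> 64/25"
  shows "3/160 \<le> binom_weight n p 0"
proof -
  have "- (384/100) \<le> real n * (- p - 2 * p^2)"
  proof -
    have "real n * (p + 2 * p^2) = real n * p * (1 + 2 * p)" by (simp add: power2_eq_square algebra_simps)
    also have "\<dots> \<le> 64/25 * (3/2)" using assms by (intro mult_mono) auto
    finally show ?thesis by (simp add: algebra_simps)
  qed
  also have "\<dots> \<le> real n * ln (1 - p)"
    using assms by (intro mult_left_mono ln_one_minus_pos_lower_bound) auto
  finally have exponent: "- (384/100) \<le> real n * ln (1 - p)" .
  have "3/160 \<le> exp (- (384/100 :: real))"
    using exp_384_le by (simp add: exp_minus field_simps)
  also have "\<dots> \<le> exp (real n * ln (1 - p))" using exponent by simp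
  also have "\<dots> = binom_weight n p 0"
    using assms by (simp add: binom_weight_def exp_of_nat_mult)
  finally show ?thesis .
qed

lemma gap_exponent_le:
  fixes s q :: real
  assumes s: "8/5 \<le> s" and q: "3/4 \<le> q" "q \<le> 1"
  shows "(s/2 + 1/2)^2 / ((s^2 - s/2) * q) \<le> 129/100"
proof -
  have "0 < s * (s - 1/2)" using s by simp
  hence pos: "0 < s^2 - s/2" by (simp add: power2_eq_square algebra_simps)
  have "129/100 * ((s^2 - s/2) * (3/4)) - (s/2 + 1/2)^2
      = 7175/10000 * (s - 8/5)^2 + 131225/100000 * (s - 8/5) + 128/10000"
    by (simp add: power2_eq_square field_simps)
  also have "\<dots> \<ge> 0" using s by simp
  finally have "(s/2 + 1/2)^2 \<le> 129/100 * ((s^2 - s/2) * (3/4))" by simp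
  also have "\<dots> \<le> 129/100 * ((s^2 - s/2) * q)" using pos q by (intro mult_left_mono) auto
  finally show ?thesis using pos q by (simp add: divide_le_eq)
qed

lemma lower_tail_constant_ge:
  fixes s q :: real
  assumes s: "8/5 \<le> s" and q: "3/4 \<le> q" "q \<le> 1"
  defines "v \<equiv> s^2 * q" and "X \<equiv> (s/2 + 1/2)^2 / (2 * ((s^2 - s/2) * q))"
  shows "3/160 \<le> (v / sqrt (3 * v + 1) / 2 * exp (- X))^2 / v"
proof -
  have "48/25 \<le> v"
    using s q mult_mono[of "8/5" s "8/5" s] mult_mono[of "64/25" "s * s" "3/4" q]
    by (simp add: v_def power2_eq_square)
  hence V: "12/169 \<le> v / (4 * (3 * v + 1))" by (simp add: field_simps)
  hence "0 \<le> v / (4 * (3 * v + 1))" by linarith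
  have "100/378 \<le> exp (- (129/100 :: real))"
    using exp_129_le by (simp add: exp_minus field_simps)
  also have "\<dots> \<le> exp (- (2 * X))" using gap_exponent_le[OF s q] by (simp add: X_def)
  finally have E: "100/378 \<le> exp (- (2 * X))" .
  have "(3::real)/160 \<le> 12/169 * (100/378)" by simp
  also have "\<dots> \<le> v / (4 * (3 * v + 1)) * exp (- (2 * X))"
    using V E \<open>0 \<le> v / (4 * (3 * v + 1))\<close> by (intro mult_mono) auto
  also have "\<dots> = (v / sqrt (3 * v + 1) / 2 * exp (- X))^2 / v"
  proof -
    have "0 < v" using \<open>48/25 \<le> v\<close> by simp
    moreover have "exp (- X)^2 = exp (- (2 * X))" by (simp flip: exp_double)
    ultimately show ?thesis by (simp add: power_mult_distrib power_divide power2_eq_square)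
  qed
  finally show ?thesis .
qed

lemma binomial_lower_tail_ge_sq:
  assumes p: "0 < p" "p < 1" and "m < n"
    and L: "0 \<le> L" "L \<le> centered_partial_sum n p m"
  shows "L^2 / (real n * p * (1 - p)) \<le> (\<Sum>k\<le>m. binom_weight n p k)"
proof -
  have "0 < real n * p * (1 - p)" using p \<open>m < n\<close> by simp
  moreover have "L^2 \<le> real n * p * (1 - p) * (\<Sum>k\<le>m. binom_weight n p k)"
    using power_mono[OF L(2) L(1), of 2] centered_partial_sum_sq_le[of p m n] p \<open>m < n\<close>
    by simp
  ultimately show ?thesis by (simp add: divide_le_eq mult.commute)
qed

lemma binomial_lower_tail_large_mean:
  assumes p: "0 < p" "p \<le> 1/4" and mean: "64/25 \<le> real n * p"
    and m: "real m \<le> real n * p - sqrt (real n * p) / 2"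
      "real n * p - sqrt (real n * p) / 2 < real m + 1"
  shows "3/160 \<le> (\<Sum>k\<le>m. binom_weight n p k)"
proof -
  define \<mu> where "\<mu> = real n * p"
  define s where "s = sqrt \<mu>"
  define q where "q = 1 - p"
  define v where "v = \<mu> * q"
  define K where "K = nat \<lfloor>\<mu>\<rfloor>"
  define X where "X = (s/2 + 1/2)^2 / (2 * ((\<mu> - s/2) * q))"
  have "8/5 \<le> s"
    unfolding s_def using mean by (intro real_le_rsqrt) (simp add: \<mu>_def power2_eq_square)
  moreover have "s^2 = \<mu>" using mean by (simp add: s_def \<mu>_def)
  ultimately have s: "s^2 = \<mu>" "8/5 \<le> s" by simp_all
  have q: "3/4 \<le> q" "q \<le> 1" using p by (simp_all add: q_def)
  have K: "real K \<le> \<mu>" "\<mu> < real K + 1" using mean by (simp_all add: K_def \<mu>_def)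
  have "0 < real n" using mean by (cases "n = 0") auto
  hence "\<mu> < real n" using p mult_strict_left_mono[of p 1 "real n"] by (simp add: \<mu>_def)
  hence "K < n" "m < n" using K m s(2) by (simp_all add: \<mu>_def s_def)
  have t: "1/2 \<le> s/2" "s/2 < \<mu>"
  proof -
    have "8/5 * s \<le> s * s" using s(2) by (intro mult_right_mono) auto
    with s show "1/2 \<le> s/2" "s/2 < \<mu>" unfolding power2_eq_square by linarith+
  qed
  have growth: "centered_partial_sum n p K \<le> centered_partial_sum n p m * exp X"
    using centered_partial_sum_le_exp_gap[OF _ _ \<open>K < n\<close>, where m=m and t="s/2"] p K m t
    by (simp add: X_def \<mu>_def s_def q_def)
  have "v / sqrt (3 * v + 1) \<le> 2 * centered_partial_sum n p K"
    using binomial_mean_abs_deviation_ge[of p n] sum_abs_centered_eq[of K n p] K \<open>K < n\<close> p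
    by (simp add: v_def \<mu>_def q_def)
  also note growth
  finally have "v / sqrt (3 * v + 1) / 2 \<le> centered_partial_sum n p m * exp X" by simp
  from mult_right_mono[OF this, of "exp (- X)"]
  have lower: "v / sqrt (3 * v + 1) / 2 * exp (- X) \<le> centered_partial_sum n p m"
    by (simp add: exp_minus mult.assoc)
  have "3/160 \<le> (v / sqrt (3 * v + 1) / 2 * exp (- X))^2 / v"
    using lower_tail_constant_ge[OF s(2) q] by (simp add: v_def X_def flip: s(1))
  also have "\<dots> \<le> (\<Sum>k\<le>m. binom_weight n p k)"
    using binomial_lower_tail_ge_sq[OF _ _ \<open>m < n\<close> _ lower] mean q p
    by (simp add: v_def \<mu>_def q_def)
  finally show ?thesis .
qed

theorem lemma1:
  fixes n :: nat and p :: real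
  assumes "n \<ge> 16" and "1 / real n \<le> p" and "p \<le> 1 / 4"
  shows "measure_pmf.prob (binomial_pmf n p)
           {k. real k \<le> p * real n - sqrt (p * real n) / 2} \<ge> 3 / 160"
proof -
  define \<mu> where "\<mu> = real n * p"
  define m where "m = nat \<lfloor>\<mu> - sqrt \<mu> / 2\<rfloor>"
  have p: "0 < p" "p < 1" using assms by (auto intro: less_le_trans[of 0 "1 / real n"])
  have "1 \<le> \<mu>" using assms by (simp add: \<mu>_def field_simps)
  hence "sqrt \<mu> / 2 \<le> \<mu>"
    using real_sqrt_le_mono[of \<mu> "\<mu>^2"] by (simp add: power2_eq_square)
  hence m: "real m \<le> \<mu> - sqrt \<mu> / 2" "\<mu> - sqrt \<mu> / 2 < real m + 1"
    by (simp_all add: m_def)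
  have "{k. real k \<le> p * real n - sqrt (p * real n) / 2} = {..m}"
    using m by (force simp: \<mu>_def mult.commute)
  hence prob: "measure_pmf.prob (binomial_pmf n p) {k. real k \<le> p * real n - sqrt (p * real n) / 2}
      = (\<Sum>k\<le>m. binom_weight n p k)"
    using prob_binomial_pmf_atMost p by simp
  show ?thesis
  proof (cases "\<mu> \<le> 64/25")
    case True
    have "binom_weight n p 0 \<le> (\<Sum>k\<le>m. binom_weight n p k)"
      using p by (intro member_le_sum binom_weight_nonneg) auto
    with binom_weight_zero_ge[of p n] True p assms(3) show ?thesis
      by (simp add: prob \<mu>_def)
  next
    case False
    with binomial_lower_tail_large_mean[of p n m] p assms(3) m show ?thesis
      by (simp add: prob \<mu>_def)
  qed
qed

end
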